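(* Let $a_1,a_2,\dots$ and $b_0,b_1,\dots$ be arbitrary sequences of real numbers, let $0<p<1$, and let $J\subset\mathbb{Z}^+$ be a set of indices such that $a_j=0$ for all $j\in J$. Then \[ \sum_{m=1}^\infty\left|\frac{1}{mp}\sum_{k=1}^m b_{m-k}\,k\,a_k\sqrt{B(m,k,p)}\right|^2 \leqslant\left(\sum_{k\in\mathbb{Z}^+\setminus J}p^{k-2}\right)b_0^2\left(\sum_{k=1}^\infty a_k^2\right)+C_J(p)\left(\sum_{k=1}^\infty a_k^2\right)\left(\sum_{j=1}^\infty b_j^2\right). \]
   Context: $\mathbb{Z}^+$ denotes the set of positive integers. $B(m,k,p)=\binom{m}{k}p^k(1-p)^{m-k}$. For $J\subset\mathbb{Z}^+$, $s\in\mathbb{Z}^+$ and $0<p<1$, \[ h_J(s,p)=\frac{(1-p)^s}{p^2}\sum_{k\in\mathbb{Z}^+\setminus J}\frac{k^2}{(k+s)^2}\binom{k+s}{k}p^k,\qquad C_J(p)=\max_{s\in\mathbb{Z}^+}h_J(s,p). \] *)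

theory Defs
  imports Complex_Main "HOL-Library.Extended_Nonnegative_Real"
begin

definition Bin :: "nat \<Rightarrow> nat \<Rightarrow> real \<Rightarrow> real" where
  "Bin m k p = real (m choose k) * p ^ k * (1 - p) ^ (m - k)"

text \<open>h_J(s,p); the series converges for 0<p<1.\<close>
definition hJ :: "nat set \<Rightarrow> nat \<Rightarrow> real \<Rightarrow> real" where
  "hJ J s p = (1 - p) ^ s / p ^ 2 *
     (\<Sum>k. if 1 \<le> k \<and> k \<notin> J
           then real k ^ 2 / real (k + s) ^ 2 * real ((k + s) choose k) * p ^ k else 0)"

text \<open>C_J(p) = max over positive s of h_J(s,p), rendered as a supremum in [0,\<infinity>].\<close>
definition CJ :: "nat set \<Rightarrow> real \<Rightarrow> ennreal" where
  "CJ J p = (SUP s\<in>{s::nat. 1 \<le> s}. ennreal (hJ J s p))"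

end

theory Submission imports Defs "HOL-Analysis.Convex" begin

(* Write w(m,k) = k sqrt(B(m,k,p)) / (m p) for the weight of a_k in the m-th term.  Since a vanishes
   on J, Cauchy-Schwarz bounds the m-th term by (sum of a_k^2) times the sum of (b_(m-k) w(m,k))^2
   over k in {1..m} - J.  Summing over m and regrouping by the shift s = m - k, the coefficient of
   b_s^2 is the sum of w(k+s,k)^2 over k not in J: for s = 0 this is the sum of p^(k-2), for s >= 1
   it is a partial sum of the series defining h_J(s,p), hence at most C_J(p). *)

definition binomial_weight :: "real \<Rightarrow> nat \<Rightarrow> nat \<Rightarrow> real" where
  "binomial_weight p m k = real k * sqrt (Bin m k p) / (real m * p)"

lemma binomial_weight_diagonal_sq:
  assumes "0 < p" "1 \<le> k"
  shows "(binomial_weight p k k)\<^sup>2 = p powr (real k - 2)"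
proof -
  have "(binomial_weight p k k)\<^sup>2 = p ^ k / p\<^sup>2"
    using assms by (simp add: binomial_weight_def Bin_def power_divide power_mult_distrib)
  also have "\<dots> = p powr (real k - 2)"
    using assms by (simp add: powr_diff powr_realpow)
  finally show ?thesis .
qed

lemma binomial_weight_shifted_sq:
  assumes "0 \<le> p" "p \<le> 1"
  shows "(binomial_weight p (k + s) k)\<^sup>2
           = (1 - p) ^ s / p\<^sup>2 * (real k ^ 2 / real (k + s) ^ 2 * real ((k + s) choose k) * p ^ k)"
  using assms by (simp add: binomial_weight_def Bin_def power_divide power_mult_distrib mult_ac)

lemma summable_binomial_times_power:
  fixes p :: real
  assumes "0 \<le> p" "p < 1"
  shows "summable (\<lambda>k. real ((k + s) choose k) * p ^ k)"
proof (rule summable_ratio_test[where c = "(1 + p) / 2" and N = "nat \<lceil>2 * s * p / (1 - p)\<rceil>"])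
  show "(1 + p) / 2 < 1" using assms by simp
next
  fix n assume "nat \<lceil>2 * s * p / (1 - p)\<rceil> \<le> n"
  then have "2 * s * p \<le> real n * (1 - p)"
    using assms by (simp add: field_simps)
  then have ratio: "real (Suc (n + s)) * p / real (Suc n) \<le> (1 + p) / 2"
    using assms by (simp add: field_simps)
  have "real (Suc n + s choose Suc n) = real (Suc (n + s)) * real (n + s choose n) / real (Suc n)"
    using Suc_times_binomial_eq[of "n + s" n] by (simp add: field_simps flip: of_nat_mult)
  then have "norm (real (Suc n + s choose Suc n) * p ^ Suc n)
      = real (Suc (n + s)) * p / real (Suc n) * norm (real (n + s choose n) * p ^ n)"
    using assms by (simp add: field_simps)
  also have "\<dots> \<le> (1 + p) / 2 * norm (real (n + s choose n) * p ^ n)"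
    using ratio by (rule mult_right_mono) simp
  finally show "norm (real (Suc n + s choose Suc n) * p ^ Suc n)
      \<le> (1 + p) / 2 * norm (real (n + s choose n) * p ^ n)" .
qed

lemma summable_hJ_series:
  fixes p :: real
  assumes "0 \<le> p" "p < 1"
  shows "summable (\<lambda>k. if 1 \<le> k \<and> k \<notin> J
           then real k ^ 2 / real (k + s) ^ 2 * real ((k + s) choose k) * p ^ k else 0)"
proof (rule summable_comparison_test'[OF summable_binomial_times_power[OF assms, of s], where N = 0])
  fix k :: nat
  have "real k ^ 2 / real (k + s) ^ 2 \<le> 1"
    by (simp add: divide_le_eq_1 power_mono)
  then have "real k ^ 2 / real (k + s) ^ 2 * (real ((k + s) choose k) * p ^ k)
      \<le> real ((k + s) choose k) * p ^ k"
    using assms mult_right_mono[of _ 1] by fastforce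
  then show "norm (if 1 \<le> k \<and> k \<notin> J
           then real k ^ 2 / real (k + s) ^ 2 * real ((k + s) choose k) * p ^ k else 0)
      \<le> real ((k + s) choose k) * p ^ k"
    using assms by (auto simp: mult.assoc)
qed

lemma sum_binomial_weight_shifted_le_hJ:
  assumes "0 < p" "p < 1"
  shows "(\<Sum>k\<in>{1..<K} - J. (binomial_weight p (k + s) k)\<^sup>2) \<le> hJ J s p"
proof -
  define f where "f k = (if 1 \<le> k \<and> k \<notin> J
           then real k ^ 2 / real (k + s) ^ 2 * real ((k + s) choose k) * p ^ k else 0)" for k
  have "{1..<K} - J = {..<K} \<inter> {k. 1 \<le> k \<and> k \<notin> J}"
    by auto
  then have "(\<Sum>k\<in>{1..<K} - J. (binomial_weight p (k + s) k)\<^sup>2)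
      = (1 - p) ^ s / p\<^sup>2 * (\<Sum>k\<in>{..<K} \<inter> {k. 1 \<le> k \<and> k \<notin> J}.
          real k ^ 2 / real (k + s) ^ 2 * real ((k + s) choose k) * p ^ k)"
    using assms by (simp add: binomial_weight_shifted_sq sum_distrib_left)
  also have "\<dots> = (1 - p) ^ s / p\<^sup>2 * (\<Sum>k<K. f k)"
    unfolding f_def by (subst sum.inter_restrict) auto
  also have "\<dots> \<le> (1 - p) ^ s / p\<^sup>2 * suminf f"
    using assms summable_hJ_series[of p J s]
    by (intro mult_left_mono sum_le_suminf) (auto simp: f_def)
  also have "\<dots> = hJ J s p"
    unfolding hJ_def f_def ..
  finally show ?thesis .
qed

lemma sum_triangle_reindex:
  fixes F :: "nat \<Rightarrow> nat \<Rightarrow> 'a::comm_monoid_add"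
  shows "(\<Sum>m<N. \<Sum>k\<in>{1..m} - J. F k (m - k)) = (\<Sum>s<N. \<Sum>k\<in>{1..<N - s} - J. F k s)"
proof -
  have "(\<Sum>m<N. \<Sum>k\<in>{1..m} - J. F k (m - k)) = (\<Sum>(m, k)\<in>Sigma {..<N} (\<lambda>m. {1..m} - J). F k (m - k))"
    by (rule sum.Sigma) auto
  also have "\<dots> = (\<Sum>(s, k)\<in>Sigma {..<N} (\<lambda>s. {1..<N - s} - J). F k s)"
    by (rule sum.reindex_bij_witness[where i = "\<lambda>(s, k). (s + k, k)" and j = "\<lambda>(m, k). (m - k, k)"])
       auto
  also have "\<dots> = (\<Sum>s<N. \<Sum>k\<in>{1..<N - s} - J. F k s)"
    by (rule sum.Sigma[symmetric]) auto
  finally show ?thesis .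
qed

lemma ennreal_sum_le_suminf_If:
  assumes "finite F" "\<And>k. k \<in> F \<Longrightarrow> P k" "\<And>k. P k \<Longrightarrow> 0 \<le> f k"
  shows "ennreal (\<Sum>k\<in>F. f k) \<le> (\<Sum>k. ennreal (if P k then f k else 0))"
proof -
  have "ennreal (\<Sum>k\<in>F. f k) = (\<Sum>k\<in>F. ennreal (f k))"
    using assms(2,3) by (simp add: sum_ennreal)
  also have "\<dots> = (\<Sum>k\<in>F. ennreal (if P k then f k else 0))"
    using assms(2) by (intro sum.cong) auto
  also have "\<dots> \<le> (\<Sum>k. ennreal (if P k then f k else 0))"
    using assms(1) by (intro sum_le_suminf) auto
  finally show ?thesis .
qed

lemma convolution_term_sq_le:
  assumes "\<forall>j\<in>J. a j = 0"
  shows "\<bar>1 / (real m * p) * (\<Sum>k=1..m. b (m - k) * real k * a k * sqrt (Bin m k p))\<bar> ^ 2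
    \<le> (\<Sum>k=1..m. (a k)\<^sup>2) * (\<Sum>k\<in>{1..m} - J. (b (m - k) * binomial_weight p m k)\<^sup>2)"
proof -
  have "1 / (real m * p) * (\<Sum>k=1..m. b (m - k) * real k * a k * sqrt (Bin m k p))
      = (\<Sum>k=1..m. a k * (b (m - k) * binomial_weight p m k))"
    unfolding binomial_weight_def sum_distrib_left by (rule sum.cong) auto
  also have "\<dots> = (\<Sum>k\<in>{1..m} - J. a k * (b (m - k) * binomial_weight p m k))"
    by (rule sum.mono_neutral_right) (use assms in auto)
  finally have "\<bar>1 / (real m * p) * (\<Sum>k=1..m. b (m - k) * real k * a k * sqrt (Bin m k p))\<bar> ^ 2
      = (\<Sum>k\<in>{1..m} - J. a k * (b (m - k) * binomial_weight p m k))\<^sup>2"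
    by simp
  also have "\<dots> \<le> (\<Sum>k\<in>{1..m} - J. (a k)\<^sup>2) * (\<Sum>k\<in>{1..m} - J. (b (m - k) * binomial_weight p m k)\<^sup>2)"
    by (rule Cauchy_Schwarz_ineq_sum)
  also have "\<dots> \<le> (\<Sum>k=1..m. (a k)\<^sup>2) * (\<Sum>k\<in>{1..m} - J. (b (m - k) * binomial_weight p m k)\<^sup>2)"
    by (intro mult_right_mono sum_mono2 sum_nonneg) auto
  finally show ?thesis .
qed

lemma ennreal_sum_binomial_weight_diagonal_le:
  assumes "0 < p"
  shows "ennreal (\<Sum>k\<in>{1..<K} - J. (binomial_weight p k k)\<^sup>2)
    \<le> (\<Sum>k. ennreal (if 1 \<le> k \<and> k \<notin> J then p powr (real k - 2) else 0))"
proof -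
  have "(\<Sum>k\<in>{1..<K} - J. (binomial_weight p k k)\<^sup>2) = (\<Sum>k\<in>{1..<K} - J. p powr (real k - 2))"
    using assms by (intro sum.cong) (auto simp: binomial_weight_diagonal_sq)
  also have "ennreal \<dots> \<le> (\<Sum>k. ennreal (if 1 \<le> k \<and> k \<notin> J then p powr (real k - 2) else 0))"
    by (rule ennreal_sum_le_suminf_If) auto
  finally show ?thesis .
qed

lemma ennreal_sum_binomial_weight_shifted_le_CJ:
  assumes "0 < p" "p < 1" "1 \<le> s"
  shows "ennreal (\<Sum>k\<in>{1..<K} - J. (binomial_weight p (k + s) k)\<^sup>2) \<le> CJ J p"
proof -
  have "ennreal (\<Sum>k\<in>{1..<K} - J. (binomial_weight p (k + s) k)\<^sup>2) \<le> ennreal (hJ J s p)"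
    using sum_binomial_weight_shifted_le_hJ[OF assms(1,2)] by (rule ennreal_leI)
  also have "\<dots> \<le> CJ J p"
    unfolding CJ_def using assms(3) by (intro SUP_upper) auto
  finally show ?thesis .
qed

lemma sum_shifted_binomial_weights_le:
  assumes "0 < p" "p < 1"
  shows "ennreal (\<Sum>s<N. (b s)\<^sup>2 * (\<Sum>k\<in>{1..<N - s} - J. (binomial_weight p (k + s) k)\<^sup>2))
    \<le> ennreal ((b 0)\<^sup>2) * (\<Sum>k. ennreal (if 1 \<le> k \<and> k \<notin> J then p powr (real k - 2) else 0))
      + CJ J p * (\<Sum>j. ennreal (if 1 \<le> j then (b j)\<^sup>2 else 0))"
proof (cases "N = 0")
  case False
  define T where "T s = (\<Sum>k\<in>{1..<N - s} - J. (binomial_weight p (k + s) k)\<^sup>2)" for s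
  have T_nonneg: "0 \<le> T s" for s
    unfolding T_def by (auto intro: sum_nonneg)
  have "ennreal (\<Sum>s\<in>{1..<N}. (b s)\<^sup>2 * T s) = (\<Sum>s\<in>{1..<N}. ennreal ((b s)\<^sup>2) * ennreal (T s))"
    by (simp add: T_nonneg flip: ennreal_mult)
  also have "\<dots> \<le> (\<Sum>s\<in>{1..<N}. ennreal ((b s)\<^sup>2) * CJ J p)"
    unfolding T_def using ennreal_sum_binomial_weight_shifted_le_CJ[OF assms]
    by (intro sum_mono mult_left_mono) auto
  also have "\<dots> = ennreal (\<Sum>s\<in>{1..<N}. (b s)\<^sup>2) * CJ J p"
    by (simp add: sum_distrib_right flip: sum_ennreal)
  also have "\<dots> \<le> (\<Sum>j. ennreal (if 1 \<le> j then (b j)\<^sup>2 else 0)) * CJ J p"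
    by (intro mult_right_mono ennreal_sum_le_suminf_If) auto
  finally have off_diagonal: "ennreal (\<Sum>s\<in>{1..<N}. (b s)\<^sup>2 * T s)
      \<le> CJ J p * (\<Sum>j. ennreal (if 1 \<le> j then (b j)\<^sup>2 else 0))"
    by (simp add: mult.commute)
  have "{..<N} = insert 0 {1..<N}"
    using False by auto
  then have "ennreal (\<Sum>s<N. (b s)\<^sup>2 * T s)
      = ennreal ((b 0)\<^sup>2) * ennreal (T 0) + ennreal (\<Sum>s\<in>{1..<N}. (b s)\<^sup>2 * T s)"
    by (simp add: ennreal_plus ennreal_mult T_nonneg sum_nonneg)
  also have "\<dots> \<le> ennreal ((b 0)\<^sup>2) * (\<Sum>k. ennreal (if 1 \<le> k \<and> k \<notin> J then p powr (real k - 2) else 0))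
      + CJ J p * (\<Sum>j. ennreal (if 1 \<le> j then (b j)\<^sup>2 else 0))"
    using ennreal_sum_binomial_weight_diagonal_le[OF assms(1)] off_diagonal
    by (intro add_mono mult_left_mono) (auto simp: T_def)
  finally show ?thesis
    unfolding T_def .
qed simp

lemma convolution_term_le:
  assumes "\<forall>j\<in>J. a j = 0"
  shows "ennreal (if 1 \<le> m then
            \<bar>1 / (real m * p) * (\<Sum>k=1..m. b (m - k) * real k * a k * sqrt (Bin m k p))\<bar> ^ 2
          else 0)
    \<le> (\<Sum>k. ennreal (if 1 \<le> k then (a k)\<^sup>2 else 0))
      * ennreal (\<Sum>k\<in>{1..m} - J. (b (m - k) * binomial_weight p m k)\<^sup>2)"
proof -
  have "ennreal (if 1 \<le> m then
            \<bar>1 / (real m * p) * (\<Sum>k=1..m. b (m - k) * real k * a k * sqrt (Bin m k p))\<bar> ^ 2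
          else 0)
      \<le> ennreal ((\<Sum>k=1..m. (a k)\<^sup>2) * (\<Sum>k\<in>{1..m} - J. (b (m - k) * binomial_weight p m k)\<^sup>2))"
    using convolution_term_sq_le[OF assms] by (intro ennreal_leI) (auto intro: sum_nonneg)
  also have "\<dots> = ennreal (\<Sum>k=1..m. (a k)\<^sup>2)
      * ennreal (\<Sum>k\<in>{1..m} - J. (b (m - k) * binomial_weight p m k)\<^sup>2)"
    by (simp add: ennreal_mult sum_nonneg)
  also have "\<dots> \<le> (\<Sum>k. ennreal (if 1 \<le> k then (a k)\<^sup>2 else 0))
      * ennreal (\<Sum>k\<in>{1..m} - J. (b (m - k) * binomial_weight p m k)\<^sup>2)"
    by (intro mult_right_mono ennreal_sum_le_suminf_If) auto
  finally show ?thesis .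
qed

lemma sum_convolution_weights_by_shift:
  "(\<Sum>m<N. \<Sum>k\<in>{1..m} - J. (b (m - k) * binomial_weight p m k)\<^sup>2)
    = (\<Sum>s<N. (b s)\<^sup>2 * (\<Sum>k\<in>{1..<N - s} - J. (binomial_weight p (k + s) k)\<^sup>2))"
proof -
  have "(\<Sum>m<N. \<Sum>k\<in>{1..m} - J. (b (m - k) * binomial_weight p m k)\<^sup>2)
      = (\<Sum>m<N. \<Sum>k\<in>{1..m} - J. (b (m - k) * binomial_weight p (k + (m - k)) k)\<^sup>2)"
    by (intro sum.cong) auto
  also have "\<dots> = (\<Sum>s<N. \<Sum>k\<in>{1..<N - s} - J. (b s * binomial_weight p (k + s) k)\<^sup>2)"
    by (rule sum_triangle_reindex[where F = "\<lambda>k s. (b s * binomial_weight p (k + s) k)\<^sup>2"])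
  finally show ?thesis
    by (simp add: sum_distrib_left power_mult_distrib)
qed

theorem lemma1:
  fixes a b :: "nat \<Rightarrow> real" and p :: real and J :: "nat set"
  assumes "0 < p" and "p < 1"
    and "J \<subseteq> {k. 1 \<le> k}"
    and "\<forall>j\<in>J. a j = 0"
  shows "(\<Sum>m. ennreal (if 1 \<le> m then
            \<bar>1 / (real m * p) * (\<Sum>k=1..m. b (m - k) * real k * a k * sqrt (Bin m k p))\<bar> ^ 2
          else 0))
    \<le> (\<Sum>k. ennreal (if 1 \<le> k \<and> k \<notin> J then p powr (real k - 2) else 0))
        * ennreal ((b 0)\<^sup>2) * (\<Sum>k. ennreal (if 1 \<le> k then (a k)\<^sup>2 else 0))
      + CJ J p * (\<Sum>k. ennreal (if 1 \<le> k then (a k)\<^sup>2 else 0))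
        * (\<Sum>j. ennreal (if 1 \<le> j then (b j)\<^sup>2 else 0))"
proof -
  define A where "A = (\<Sum>k. ennreal (if 1 \<le> k then (a k)\<^sup>2 else 0))"
  define B where "B = (\<Sum>j. ennreal (if 1 \<le> j then (b j)\<^sup>2 else 0))"
  define P where "P = (\<Sum>k. ennreal (if 1 \<le> k \<and> k \<notin> J then p powr (real k - 2) else 0))"
  define G where "G m = (\<Sum>k\<in>{1..m} - J. (b (m - k) * binomial_weight p m k)\<^sup>2)" for m
  have "(\<Sum>m<N. ennreal (if 1 \<le> m then
            \<bar>1 / (real m * p) * (\<Sum>k=1..m. b (m - k) * real k * a k * sqrt (Bin m k p))\<bar> ^ 2
          else 0)) \<le> A * (ennreal ((b 0)\<^sup>2) * P + CJ J p * B)" for N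
  proof -
    have "(\<Sum>m<N. ennreal (if 1 \<le> m then
            \<bar>1 / (real m * p) * (\<Sum>k=1..m. b (m - k) * real k * a k * sqrt (Bin m k p))\<bar> ^ 2
          else 0)) \<le> (\<Sum>m<N. A * ennreal (G m))"
      unfolding A_def G_def using assms(4) by (intro sum_mono convolution_term_le)
    also have "\<dots> = A * ennreal (\<Sum>m<N. G m)"
      unfolding G_def by (simp add: sum_nonneg flip: sum_distrib_left)
    also have "\<dots> \<le> A * (ennreal ((b 0)\<^sup>2) * P + CJ J p * B)"
      unfolding G_def sum_convolution_weights_by_shift P_def B_def
      by (intro mult_left_mono sum_shifted_binomial_weights_le[OF assms(1,2)]) simp
    finally show ?thesis .
  qed
  then have "(\<Sum>m. ennreal (if 1 \<le> m then
            \<bar>1 / (real m * p) * (\<Sum>k=1..m. b (m - k) * real k * a k * sqrt (Bin m k p))\<bar> ^ 2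
          else 0)) \<le> A * (ennreal ((b 0)\<^sup>2) * P + CJ J p * B)"
    by (intro suminf_le_const) auto
  then show ?thesis
    unfolding A_def B_def P_def by (simp add: algebra_simps)
qed

end
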